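(* Let $M\in M_n(\mathbb{Z})$ be a symmetric positive semidefinite matrix, and let $\lambda_1$ be its largest eigenvalue. Collapsed values are integers. (i) If $\mu\notin[-1,\lambda_1+\sqrt2]$, then $\mu$ is not a collapsed value of $M$. (ii) The value $\mu=-1$ is a collapsed value of $M$ if either two columns of $M$ are equal or $Me_i=-e_j$ for some $i\neq j$. (iii) If $M$ is positive definite or is the Laplacian of a connected graph, then no $\mu<0$ is a collapsed value of $M$. (iv) If $M$ is positive definite with smallest eigenvalue $\lambda_n>0$, and $\mu$ is a collapsed value of $M$, then $\mu\ge\lambda_n-\sqrt2$.
   Context: For $M\in M_n(\mathbb{Z})$, $\mathrm{Im}(M)$ is the $\mathbb{Z}$-span of its columns; $M$ is spread if the quotient map $\mathbb{Z}^n\to\mathbb{Z}^n/\mathrm{Im}(M)$ is injective on the standard basis $\{e_1,\dots,e_n\}$. An integer $\mu$ is a collapsed value of $M$ if $M-\mu\,\mathrm{Id}$ is not spread. The Laplacian of a graph (multiple edges allowed, no loops) is the matrix with diagonal entries the vertex degrees and off-diagonal $(i,j)$ entry minus the number of edges joining $v_i$ and $v_j$. *)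

theory Defs
  imports "Jordan_Normal_Form.Char_Poly"
begin

definition int_image :: "int mat \<Rightarrow> int vec set" where
  "int_image M = {M *\<^sub>v v | v. v \<in> carrier_vec (dim_col M)}"

text \<open>M is spread: the quotient map Z^n -> Z^n / Im(M) is injective on the
  standard basis, i.e. e_i - e_j is not in Im(M) for i \<noteq> j.\<close>
definition spread :: "int mat \<Rightarrow> bool" where
  "spread M = (\<forall>i < dim_row M. \<forall>j < dim_row M. i \<noteq> j \<longrightarrow>
      unit_vec (dim_row M) i - unit_vec (dim_row M) j \<notin> int_image M)"

definition collapsed_value :: "int mat \<Rightarrow> int \<Rightarrow> bool" where
  "collapsed_value M \<mu> = (\<not> spread (M - of_int \<mu> \<cdot>\<^sub>m 1\<^sub>m (dim_row M)))"

definition real_mat :: "int mat \<Rightarrow> real mat" where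
  "real_mat M = map_mat real_of_int M"

definition pos_semidef :: "real mat \<Rightarrow> bool" where
  "pos_semidef A = (\<forall>x \<in> carrier_vec (dim_row A). x \<bullet> (A *\<^sub>v x) \<ge> 0)"

definition pos_def :: "real mat \<Rightarrow> bool" where
  "pos_def A = (\<forall>x \<in> carrier_vec (dim_row A). x \<noteq> 0\<^sub>v (dim_row A) \<longrightarrow> x \<bullet> (A *\<^sub>v x) > 0)"

definition largest_eigenvalue :: "real mat \<Rightarrow> real \<Rightarrow> bool" where
  "largest_eigenvalue A l = (eigenvalue A l \<and> (\<forall>k. eigenvalue A k \<longrightarrow> k \<le> l))"

definition smallest_eigenvalue :: "real mat \<Rightarrow> real \<Rightarrow> bool" where
  "smallest_eigenvalue A l = (eigenvalue A l \<and> (\<forall>k. eigenvalue A k \<longrightarrow> l \<le> k))"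

text \<open>M (n x n) is the Laplacian of a connected multigraph without loops on
  vertices 0..n-1, with edge multiplicities w i j.\<close>
definition laplacian_of_connected_graph :: "int mat \<Rightarrow> bool" where
  "laplacian_of_connected_graph M = (\<exists>w :: nat \<Rightarrow> nat \<Rightarrow> nat.
     M \<in> carrier_mat (dim_row M) (dim_row M) \<and>
     (\<forall>i < dim_row M. \<forall>j < dim_row M. w i j = w j i) \<and>
     (\<forall>i < dim_row M. w i i = 0) \<and>
     (\<forall>i < dim_row M. \<forall>j < dim_row M. i \<noteq> j \<longrightarrow> M $$ (i, j) = - int (w i j)) \<and>
     (\<forall>i < dim_row M. M $$ (i, i) = int (\<Sum>j \<in> {0..<dim_row M}. w i j)) \<and>
     (\<forall>i < dim_row M. \<forall>j < dim_row M.
        (i, j) \<in> {(a, b). a < dim_row M \<and> b < dim_row M \<and> w a b > 0}\<^sup>*))"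

end

theory Submission
  imports Defs "HOL-Analysis.Function_Topology"
begin

(* If mu is a collapsed value, there is an integer vector v with (M - mu I) v = e_i - e_j for
   some i ~= j. Pairing with v gives  v^T M v - mu |v|^2 = v_i - v_j,  and since v is a nonzero
   integer vector,  1 <= |v|^2  and  |v_i - v_j| <= v_i^2 + v_j^2 <= |v|^2.  So mu differs by at most
   1 from the Rayleigh quotient of v, which lies between the extreme eigenvalues of M; this gives
   lambda_n - 1 <= mu <= lambda_1 + 1 (sharper than the bounds with sqrt 2), and mu >= -1 when M is
   positive semidefinite. If M is positive definite then v^T M v >= 1, which excludes mu = -1.
   For a connected Laplacian, mu = -1 forces v^T M v = 0, hence M v = 0 and v = e_i - e_j,
   contradicting M_ii > M_ij. For (ii), v = e_i - e_j resp. v = e_i is a witness for mu = -1.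
   The Rayleigh bounds are obtained by minimising the quadratic form on the compact unit sphere;
   a minimiser is an eigenvector by a first-variation argument. *)

section \<open>Rayleigh quotient bounds for real symmetric matrices\<close>

lemma nonpos_if_le_pos_multiples:
  fixes a c :: real
  assumes "\<And>t. 0 < t \<Longrightarrow> a \<le> t * c"
  shows "a \<le> 0"
proof (rule field_le_epsilon)
  fix e :: real assume "0 < e"
  show "a \<le> 0 + e"
  proof -
    have "a \<le> e / (\<bar>c\<bar> + 1) * c" using assms[of "e / (\<bar>c\<bar> + 1)"] \<open>0 < e\<close> by simp
    also have "\<dots> \<le> e / (\<bar>c\<bar> + 1) * \<bar>c\<bar>" using \<open>0 < e\<close> by (intro mult_left_mono) auto
    also have "\<dots> \<le> e" using \<open>0 < e\<close> by (simp add: field_simps)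
    finally show ?thesis by simp
  qed
qed

lemma square_index_le_scalar_prod_self:
  fixes v :: "'a :: linordered_idom vec"
  assumes "i < dim_vec v"
  shows "(v $ i)^2 \<le> v \<bullet> v"
  unfolding scalar_prod_def power2_eq_square using assms by (intro member_le_sum) auto

lemma scalar_prod_vec_mult_mat_vec:
  assumes "A \<in> carrier_mat n n"
  shows "vec n f \<bullet> (A *\<^sub>v vec n f) = (\<Sum>i<n. f i * (\<Sum>j<n. A $$ (i, j) * f j))"
  using assms by (simp add: scalar_prod_def lessThan_atLeast0)

lemma minus_smult_one_mult_mat_vec:
  fixes A :: "'a :: comm_ring_1 mat"
  assumes "A \<in> carrier_mat n n" and "v \<in> carrier_vec n"
  shows "(A - c \<cdot>\<^sub>m 1\<^sub>m n) *\<^sub>v v = A *\<^sub>v v - c \<cdot>\<^sub>v v"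
  using assms by (auto simp: minus_mult_distrib_mat_vec[of _ n n])

lemma mult_mat_vec_unit_vec:
  fixes A :: "'a :: semiring_1 mat"
  assumes "A \<in> carrier_mat m n" and "i < n"
  shows "A *\<^sub>v unit_vec n i = col A i"
  using assms by (intro eq_vecI) auto

lemma eigenvalue_uminus_iff:
  fixes A :: "'a :: comm_ring_1 mat"
  assumes "A \<in> carrier_mat n n"
  shows "eigenvalue (- A) k \<longleftrightarrow> eigenvalue A (- k)"
proof -
  have "(- A *\<^sub>v v = k \<cdot>\<^sub>v v) \<longleftrightarrow> (A *\<^sub>v v = - k \<cdot>\<^sub>v v)" if "v \<in> carrier_vec n" for v
    using assms that by (auto simp: vec_eq_iff minus_equation_iff simp del: uminus_mult_mat_vec)
  then show ?thesis using assms unfolding eigenvalue_def eigenvector_def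
    by (auto simp del: uminus_mult_mat_vec)
qed

lemma pos_semidef_quad_form_eq_0_imp_mult_eq_0:
  fixes B :: "real mat"
  assumes B: "B \<in> carrier_mat n n" and sym: "transpose_mat B = B" and "pos_semidef B"
    and x0: "x0 \<in> carrier_vec n" and zero: "x0 \<bullet> (B *\<^sub>v x0) = 0"
  shows "B *\<^sub>v x0 = 0\<^sub>v n"
proof -
  have psd: "\<forall>x\<in>carrier_vec n. 0 \<le> x \<bullet> (B *\<^sub>v x)"
    using \<open>pos_semidef B\<close> B unfolding pos_semidef_def by simp
  define b where "b = B *\<^sub>v x0"
  have b: "b \<in> carrier_vec n" using B x0 b_def by simp
  have cross: "x0 \<bullet> (B *\<^sub>v b) = b \<bullet> b"
    using transpose_vec_mult_scalar[OF B b x0] sym b x0 B unfolding b_def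
    by (simp add: comm_scalar_prod[of _ n])
  have expand: "(x0 - t \<cdot>\<^sub>v b) \<bullet> (B *\<^sub>v (x0 - t \<cdot>\<^sub>v b))
      = t^2 * (b \<bullet> (B *\<^sub>v b)) - 2 * t * (b \<bullet> b)" for t
  proof -
    have "B *\<^sub>v (x0 - t \<cdot>\<^sub>v b) = b - t \<cdot>\<^sub>v (B *\<^sub>v b)"
      using B b x0 by (simp add: mult_minus_distrib_mat_vec mult_mat_vec b_def)
    then show ?thesis
      using B b x0 cross zero[folded b_def]
      by (simp add: minus_scalar_prod_distrib[of _ n] scalar_prod_minus_distrib[of _ n]
          comm_scalar_prod[of x0 n b] power2_eq_square algebra_simps)
  qed
  have "2 * (b \<bullet> b) \<le> t * (b \<bullet> (B *\<^sub>v b))" if "t > 0" for t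
  proof -
    have "0 \<le> (x0 - t \<cdot>\<^sub>v b) \<bullet> (B *\<^sub>v (x0 - t \<cdot>\<^sub>v b))"
      using psd x0 b by simp
    then have "0 \<le> t * (t * (b \<bullet> (B *\<^sub>v b)) - 2 * (b \<bullet> b))"
      unfolding expand by (simp add: power2_eq_square algebra_simps)
    then show ?thesis using that by (simp add: zero_le_mult_iff)
  qed
  then have "2 * (b \<bullet> b) \<le> 0" by (rule nonpos_if_le_pos_multiples)
  then have "b \<bullet> b = 0" using conjugate_square_ge_0_vec[of b] by simp
  then show ?thesis using conjugate_square_eq_0_vec[OF b] unfolding b_def by simp
qed

lemma rayleigh_minimizer_is_eigenvector:
  fixes A :: "real mat"
  assumes A: "A \<in> carrier_mat n n" and sym: "transpose_mat A = A"
    and lower: "\<forall>x\<in>carrier_vec n. c * (x \<bullet> x) \<le> x \<bullet> (A *\<^sub>v x)"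
    and x0: "x0 \<in> carrier_vec n" and attained: "x0 \<bullet> (A *\<^sub>v x0) = c * (x0 \<bullet> x0)"
  shows "A *\<^sub>v x0 = c \<cdot>\<^sub>v x0"
proof -
  define B where "B = A - c \<cdot>\<^sub>m 1\<^sub>m n"
  have B: "B \<in> carrier_mat n n" unfolding B_def by (simp add: minus_carrier_mat)
  have B_mult: "B *\<^sub>v x = A *\<^sub>v x - c \<cdot>\<^sub>v x" if "x \<in> carrier_vec n" for x
    using A that unfolding B_def by (rule minus_smult_one_mult_mat_vec)
  have B_form: "x \<bullet> (B *\<^sub>v x) = x \<bullet> (A *\<^sub>v x) - c * (x \<bullet> x)" if "x \<in> carrier_vec n" for x
    using A that by (simp add: B_mult scalar_prod_minus_distrib[of _ n])
  have "transpose_mat (c \<cdot>\<^sub>m 1\<^sub>m n) = c \<cdot>\<^sub>m 1\<^sub>m n" by (intro eq_matI) auto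
  then have "transpose_mat B = B" using A sym unfolding B_def by (simp add: transpose_minus[of _ n n])
  moreover have "pos_semidef B" using lower B_form B unfolding pos_semidef_def by simp
  ultimately have "B *\<^sub>v x0 = 0\<^sub>v n"
    using pos_semidef_quad_form_eq_0_imp_mult_eq_0[OF B _ _ x0] B_form[OF x0] attained by simp
  show ?thesis
  proof (rule eq_vecI)
    fix i assume "i < dim_vec (c \<cdot>\<^sub>v x0)"
    then have "i < n" using x0 by simp
    then show "(A *\<^sub>v x0) $ i = (c \<cdot>\<^sub>v x0) $ i"
      using arg_cong[OF \<open>B *\<^sub>v x0 = 0\<^sub>v n\<close>, of "\<lambda>v. v $ i"] B_mult[OF x0] A x0 by simp
  qed (use A x0 in simp)
qed

lemma quad_form_attains_min_on_unit_sphere: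
  fixes A :: "real mat"
  assumes A: "A \<in> carrier_mat n n" and n: "0 < n"
  shows "\<exists>x0\<in>carrier_vec n. x0 \<bullet> x0 = 1 \<and>
           (\<forall>y\<in>carrier_vec n. y \<bullet> y = 1 \<longrightarrow> x0 \<bullet> (A *\<^sub>v x0) \<le> y \<bullet> (A *\<^sub>v y))"
proof -
  \<comment> \<open>the unit sphere of \<open>\<real>\<^sup>n\<close>, as a closed subset of the compact cube \<open>[-1,1]\<^sup>\<nat>\<close>\<close>
  define K where "K = PiE UNIV (\<lambda>_. {-1..1::real}) \<inter> {f. vec n f \<bullet> vec n f = 1}"
  have "compact K"
    unfolding K_def
  proof (rule compact_Int_closed)
    show "compact (PiE UNIV (\<lambda>_. {-1..1::real}))"
      using compactin_PiE[of "\<lambda>_. euclideanreal" UNIV "\<lambda>_. {-1..1}"]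
      by (simp add: euclidean_product_topology compactin_euclidean_iff)
    have "continuous_on UNIV (\<lambda>f. vec n f \<bullet> vec n (f :: nat \<Rightarrow> real))"
      by (simp add: scalar_prod_def) (intro continuous_intros; simp)
    then show "closed {f. vec n f \<bullet> vec n f = (1::real)}"
      by (intro closed_Collect_eq continuous_on_const)
  qed
  have vec_extension: "vec n (\<lambda>i. if i < n then y $ i else 0) = y"
    if "y \<in> carrier_vec n" for y :: "real vec"
    using that by auto
  have unit_sphere_in_K: "(\<lambda>i. if i < n then y $ i else 0) \<in> K"
    if y: "y \<in> carrier_vec n" "y \<bullet> y = 1" for y
  proof -
    have "\<bar>y $ i\<bar> \<le> 1" if "i < n" for i
      using square_index_le_scalar_prod_self[of i y] y that by (simp add: abs_square_le_1)
    then show ?thesis using y vec_extension[OF y(1)] unfolding K_def by (auto simp: abs_le_iff)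
  qed
  moreover have "(unit_vec n 0 :: real vec) \<bullet> unit_vec n 0 = 1" using n by simp
  ultimately have "K \<noteq> {}" using unit_vec_carrier by blast
  moreover have "continuous_on K (\<lambda>f. vec n f \<bullet> (A *\<^sub>v vec n f))"
    unfolding scalar_prod_vec_mult_mat_vec[OF A]
    by (intro continuous_intros continuous_on_subset[OF continuous_on_product_coordinates]) simp_all
  ultimately obtain f0 where "f0 \<in> K"
    and f0_min: "\<forall>f\<in>K. vec n f0 \<bullet> (A *\<^sub>v vec n f0) \<le> vec n f \<bullet> (A *\<^sub>v vec n f)"
    using continuous_attains_inf[OF \<open>compact K\<close>] by blast
  have "vec n f0 \<bullet> (A *\<^sub>v vec n f0) \<le> y \<bullet> (A *\<^sub>v y)" if "y \<in> carrier_vec n" "y \<bullet> y = 1" for y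
    using f0_min unit_sphere_in_K[OF that] vec_extension[OF that(1)] by force
  moreover have "vec n f0 \<in> carrier_vec n" and "vec n f0 \<bullet> vec n f0 = 1"
    using \<open>f0 \<in> K\<close> unfolding K_def by auto
  ultimately show ?thesis by blast
qed

lemma quad_form_ge_min_on_unit_sphere:
  fixes A :: "real mat"
  assumes A: "A \<in> carrier_mat n n"
    and lower: "\<forall>y\<in>carrier_vec n. y \<bullet> y = 1 \<longrightarrow> m \<le> y \<bullet> (A *\<^sub>v y)"
    and x: "x \<in> carrier_vec n"
  shows "m * (x \<bullet> x) \<le> x \<bullet> (A *\<^sub>v x)"
proof (cases "x = 0\<^sub>v n")
  case True
  then show ?thesis using A by simp
next
  case False
  then have "x \<bullet> x > 0" using conjugate_square_greater_0_vec[OF x] by simp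
  define s where "s = sqrt (x \<bullet> x)"
  have s: "s > 0" "s^2 = x \<bullet> x" unfolding s_def using \<open>x \<bullet> x > 0\<close> by auto
  have "(1 / s) \<cdot>\<^sub>v x \<in> carrier_vec n" and "((1 / s) \<cdot>\<^sub>v x) \<bullet> ((1 / s) \<cdot>\<^sub>v x) = 1"
    using x s by (auto simp: power2_eq_square)
  then have "m \<le> ((1 / s) \<cdot>\<^sub>v x) \<bullet> (A *\<^sub>v ((1 / s) \<cdot>\<^sub>v x))" using lower by blast
  also have "\<dots> = (x \<bullet> (A *\<^sub>v x)) / s^2" using A x by (simp add: mult_mat_vec power2_eq_square)
  finally show ?thesis using s \<open>x \<bullet> x > 0\<close> by (simp add: pos_le_divide_eq mult.commute)
qed

lemma smallest_eigenvalue_le_quad_form: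
  fixes A :: "real mat"
  assumes A: "A \<in> carrier_mat n n" and sym: "transpose_mat A = A"
    and l: "smallest_eigenvalue A l" and x: "x \<in> carrier_vec n"
  shows "l * (x \<bullet> x) \<le> x \<bullet> (A *\<^sub>v x)"
proof -
  have "0 < n"
    using l A unfolding smallest_eigenvalue_def eigenvalue_def eigenvector_def by (cases n) auto
  then obtain x0 where x0: "x0 \<in> carrier_vec n" "x0 \<bullet> x0 = 1"
    and min_on_sphere: "\<forall>y\<in>carrier_vec n. y \<bullet> y = 1 \<longrightarrow> x0 \<bullet> (A *\<^sub>v x0) \<le> y \<bullet> (A *\<^sub>v y)"
    using quad_form_attains_min_on_unit_sphere[OF A] by blast
  define m where "m = x0 \<bullet> (A *\<^sub>v x0)"
  have x0_min: "\<forall>x\<in>carrier_vec n. m * (x \<bullet> x) \<le> x \<bullet> (A *\<^sub>v x)"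
    using quad_form_ge_min_on_unit_sphere[OF A] min_on_sphere unfolding m_def by blast
  have "A *\<^sub>v x0 = m \<cdot>\<^sub>v x0"
    using rayleigh_minimizer_is_eigenvector[OF A sym x0_min x0(1)] x0(2) unfolding m_def by simp
  moreover have "x0 \<noteq> 0\<^sub>v n" using x0 by auto
  ultimately have "eigenvalue A m" using A x0 unfolding eigenvalue_def eigenvector_def by auto
  then have "l \<le> m" using l unfolding smallest_eigenvalue_def by blast
  then have "l * (x \<bullet> x) \<le> m * (x \<bullet> x)"
    using conjugate_square_ge_0_vec[of x] by (intro mult_right_mono) simp_all
  also have "\<dots> \<le> x \<bullet> (A *\<^sub>v x)" using x0_min x by blast
  finally show ?thesis .
qed

lemma quad_form_le_largest_eigenvalue:
  fixes A :: "real mat"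
  assumes A: "A \<in> carrier_mat n n" and sym: "transpose_mat A = A"
    and l: "largest_eigenvalue A l" and x: "x \<in> carrier_vec n"
  shows "x \<bullet> (A *\<^sub>v x) \<le> l * (x \<bullet> x)"
proof -
  have "smallest_eigenvalue (- A) (- l)"
    using l unfolding largest_eigenvalue_def smallest_eigenvalue_def eigenvalue_uminus_iff[OF A]
    by (metis minus_minus neg_le_iff_le)
  moreover have "transpose_mat (- A) = - A" using sym by (simp add: transpose_uminus)
  ultimately have "- l * (x \<bullet> x) \<le> x \<bullet> (- A *\<^sub>v x)"
    using smallest_eigenvalue_le_quad_form[OF uminus_carrier_mat[OF A]] x by blast
  then show ?thesis using A x by simp
qed

section \<open>Collapsed values\<close>

lemma abs_le_square_int: "\<bar>x\<bar> \<le> (x :: int)^2"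
proof (cases "x = 0")
  case False
  then have "\<bar>x\<bar> * 1 \<le> \<bar>x\<bar> * \<bar>x\<bar>" by (intro mult_left_mono) auto
  then show ?thesis by (simp add: power2_eq_square)
qed simp

lemma of_int_scalar_prod:
  assumes "v \<in> carrier_vec n" and "w \<in> carrier_vec n"
  shows "of_int (v \<bullet> w) = map_vec of_int v \<bullet> (map_vec of_int w :: 'a :: comm_ring_1 vec)"
  using assms by (simp add: scalar_prod_def)

lemma of_int_quad_form:
  assumes M: "M \<in> carrier_mat n n" and v: "v \<in> carrier_vec n"
  shows "real_of_int (v \<bullet> (M *\<^sub>v v)) =
    map_vec real_of_int v \<bullet> (real_mat M *\<^sub>v map_vec real_of_int v)"
  using M v unfolding real_mat_def of_int_hom.mult_mat_vec_hom[OF M v, symmetric]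
  by (intro of_int_scalar_prod) auto

lemma real_mat_carrier: "M \<in> carrier_mat n m \<Longrightarrow> real_mat M \<in> carrier_mat n m"
  unfolding real_mat_def by simp

lemma real_mat_symmetric: "transpose_mat M = M \<Longrightarrow> transpose_mat (real_mat M) = real_mat M"
  unfolding real_mat_def by (simp add: map_mat_transpose)

lemma quad_form_nonneg_if_pos_semidef:
  assumes M: "M \<in> carrier_mat n n" and psd: "pos_semidef (real_mat M)" and v: "v \<in> carrier_vec n"
  shows "0 \<le> v \<bullet> (M *\<^sub>v v)"
proof -
  have "0 \<le> map_vec real_of_int v \<bullet> (real_mat M *\<^sub>v map_vec real_of_int v)"
    using psd M v unfolding pos_semidef_def real_mat_def by simp
  then show ?thesis unfolding of_int_quad_form[OF M v, symmetric] by simp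
qed

lemma collapsed_value_iff:
  assumes M: "M \<in> carrier_mat n n"
  shows "collapsed_value M \<mu> \<longleftrightarrow>
    (\<exists>i<n. \<exists>j<n. i \<noteq> j \<and> (\<exists>v\<in>carrier_vec n. M *\<^sub>v v - \<mu> \<cdot>\<^sub>v v = unit_vec n i - unit_vec n j))"
proof -
  have "(M - of_int \<mu> \<cdot>\<^sub>m 1\<^sub>m n) *\<^sub>v v = M *\<^sub>v v - \<mu> \<cdot>\<^sub>v v" if "v \<in> carrier_vec n" for v
    using minus_smult_one_mult_mat_vec[OF M that] by simp
  then show ?thesis using M unfolding collapsed_value_def spread_def int_image_def
    by auto metis+
qed

lemma collapsed_witness_quad_form_bounds:
  fixes M :: "int mat"
  assumes M: "M \<in> carrier_mat n n" and v: "v \<in> carrier_vec n"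
    and ij: "i < n" "j < n" "i \<noteq> j"
    and eq: "M *\<^sub>v v - \<mu> \<cdot>\<^sub>v v = unit_vec n i - unit_vec n j"
  shows "1 \<le> v \<bullet> v" and "\<bar>v \<bullet> (M *\<^sub>v v) - \<mu> * (v \<bullet> v)\<bar> \<le> v \<bullet> v"
proof -
  have "v \<bullet> (M *\<^sub>v v) - \<mu> * (v \<bullet> v) = v \<bullet> (M *\<^sub>v v - \<mu> \<cdot>\<^sub>v v)"
    using M v by (simp add: scalar_prod_minus_distrib[of _ n])
  also have "\<dots> = v $ i - v $ j"
    using v ij unfolding eq by (simp add: scalar_prod_minus_distrib[of _ n])
  finally have identity: "v \<bullet> (M *\<^sub>v v) - \<mu> * (v \<bullet> v) = v $ i - v $ j" .
  have "v \<noteq> 0\<^sub>v n"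
  proof
    assume "v = 0\<^sub>v n"
    then have "(M *\<^sub>v v - \<mu> \<cdot>\<^sub>v v) $ i = 0" using M ij by simp
    then show False using ij unfolding eq by simp
  qed
  then obtain k where k: "k < n" "v $ k \<noteq> 0" using v by (auto simp: vec_eq_iff)
  have "1 \<le> (v $ k)^2" using k(2) by (simp add: int_one_le_iff_zero_less)
  also have "\<dots> \<le> v \<bullet> v" using square_index_le_scalar_prod_self[of k v] v k by simp
  finally show "1 \<le> v \<bullet> v" .
  have "\<bar>v $ i - v $ j\<bar> \<le> (v $ i)^2 + (v $ j)^2"
    using abs_le_square_int[of "v $ i"] abs_le_square_int[of "v $ j"] by linarith
  also have "\<dots> = (\<Sum>k\<in>{i, j}. v $ k * v $ k)" using ij by (simp add: power2_eq_square)
  also have "\<dots> \<le> v \<bullet> v"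
    unfolding scalar_prod_def using v ij by (intro sum_mono2) auto
  finally show "\<bar>v \<bullet> (M *\<^sub>v v) - \<mu> * (v \<bullet> v)\<bar> \<le> v \<bullet> v" unfolding identity .
qed

lemma collapsed_value_obtains_real_witness:
  assumes M: "M \<in> carrier_mat n n" and "collapsed_value M \<mu>"
  obtains x where "x \<in> carrier_vec n" and "1 \<le> x \<bullet> x"
    and "\<bar>x \<bullet> (real_mat M *\<^sub>v x) - of_int \<mu> * (x \<bullet> x)\<bar> \<le> x \<bullet> x"
proof -
  obtain v where v: "v \<in> carrier_vec n" and N: "1 \<le> v \<bullet> v"
    and bound: "\<bar>v \<bullet> (M *\<^sub>v v) - \<mu> * (v \<bullet> v)\<bar> \<le> v \<bullet> v"
    using assms collapsed_witness_quad_form_bounds[OF M] unfolding collapsed_value_iff[OF M] by metis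
  define x where "x = map_vec real_of_int v"
  have "x \<in> carrier_vec n" using v unfolding x_def by simp
  moreover have "1 \<le> x \<bullet> x"
    using N unfolding x_def of_int_scalar_prod[OF v v, symmetric] by simp
  moreover have "\<bar>x \<bullet> (real_mat M *\<^sub>v x) - of_int \<mu> * (x \<bullet> x)\<bar> \<le> x \<bullet> x"
    using bound
    unfolding x_def of_int_scalar_prod[OF v v, symmetric] of_int_quad_form[OF M v, symmetric]
    by (simp only: of_int_abs[symmetric] of_int_mult[symmetric] of_int_diff[symmetric] of_int_le_iff)
  ultimately show ?thesis using that by blast
qed

lemma collapsed_value_ge_minus_one:
  assumes M: "M \<in> carrier_mat n n" and psd: "pos_semidef (real_mat M)"
    and "collapsed_value M \<mu>"
  shows "-1 \<le> \<mu>"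
proof -
  obtain x where x: "x \<in> carrier_vec n" and N: "1 \<le> x \<bullet> x"
    and bound: "\<bar>x \<bullet> (real_mat M *\<^sub>v x) - of_int \<mu> * (x \<bullet> x)\<bar> \<le> x \<bullet> x"
    using collapsed_value_obtains_real_witness[OF M \<open>collapsed_value M \<mu>\<close>] by blast
  have "0 \<le> x \<bullet> (real_mat M *\<^sub>v x)" using psd x M unfolding pos_semidef_def real_mat_def by simp
  then have "0 \<le> (of_int \<mu> + 1) * (x \<bullet> x)" using bound by (simp add: algebra_simps)
  then show ?thesis using N by (simp add: zero_le_mult_iff)
qed

lemma collapsed_value_le_largest_eigenvalue:
  assumes M: "M \<in> carrier_mat n n" and sym: "transpose_mat M = M"
    and l: "largest_eigenvalue (real_mat M) l" and "collapsed_value M \<mu>"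
  shows "of_int \<mu> \<le> l + 1"
proof -
  obtain x where x: "x \<in> carrier_vec n" and N: "1 \<le> x \<bullet> x"
    and bound: "\<bar>x \<bullet> (real_mat M *\<^sub>v x) - of_int \<mu> * (x \<bullet> x)\<bar> \<le> x \<bullet> x"
    using collapsed_value_obtains_real_witness[OF M \<open>collapsed_value M \<mu>\<close>] by blast
  have "x \<bullet> (real_mat M *\<^sub>v x) \<le> l * (x \<bullet> x)"
    by (rule quad_form_le_largest_eigenvalue[OF real_mat_carrier[OF M] real_mat_symmetric[OF sym] l x])
  then have "of_int \<mu> * (x \<bullet> x) \<le> (l + 1) * (x \<bullet> x)" using bound by (simp add: algebra_simps)
  then show ?thesis using N by simp
qed

lemma collapsed_value_ge_smallest_eigenvalue:
  assumes M: "M \<in> carrier_mat n n" and sym: "transpose_mat M = M"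
    and l: "smallest_eigenvalue (real_mat M) l" and "collapsed_value M \<mu>"
  shows "l - 1 \<le> of_int \<mu>"
proof -
  obtain x where x: "x \<in> carrier_vec n" and N: "1 \<le> x \<bullet> x"
    and bound: "\<bar>x \<bullet> (real_mat M *\<^sub>v x) - of_int \<mu> * (x \<bullet> x)\<bar> \<le> x \<bullet> x"
    using collapsed_value_obtains_real_witness[OF M \<open>collapsed_value M \<mu>\<close>] by blast
  have "l * (x \<bullet> x) \<le> x \<bullet> (real_mat M *\<^sub>v x)"
    by (rule smallest_eigenvalue_le_quad_form[OF real_mat_carrier[OF M] real_mat_symmetric[OF sym] l x])
  then have "(l - 1) * (x \<bullet> x) \<le> of_int \<mu> * (x \<bullet> x)" using bound by (simp add: algebra_simps)
  then show ?thesis using N by simp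
qed

lemma collapsed_value_nonneg_if_pos_def:
  assumes M: "M \<in> carrier_mat n n" and pd: "pos_def (real_mat M)"
    and "collapsed_value M \<mu>"
  shows "0 \<le> \<mu>"
proof -
  obtain x where x: "x \<in> carrier_vec n" and N: "1 \<le> x \<bullet> x"
    and bound: "\<bar>x \<bullet> (real_mat M *\<^sub>v x) - of_int \<mu> * (x \<bullet> x)\<bar> \<le> x \<bullet> x"
    using collapsed_value_obtains_real_witness[OF M \<open>collapsed_value M \<mu>\<close>] by blast
  have "x \<noteq> 0\<^sub>v n" using N by auto
  then have "0 < x \<bullet> (real_mat M *\<^sub>v x)" using pd x M unfolding pos_def_def real_mat_def by simp
  then have "0 < (of_int \<mu> + 1) * (x \<bullet> x)" using bound by (simp add: algebra_simps)
  then show ?thesis using N by (simp add: zero_less_mult_iff)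
qed

lemma collapsed_value_minus_one_if_equal_cols:
  assumes M: "M \<in> carrier_mat n n" and ij: "i < n" "j < n" "i \<noteq> j"
    and cols: "col M i = col M j"
  shows "collapsed_value M (-1)"
proof -
  have "M *\<^sub>v (unit_vec n i - unit_vec n j) = 0\<^sub>v n"
    using M ij cols by (simp add: mult_minus_distrib_mat_vec[of _ n n] mult_mat_vec_unit_vec)
  then have "M *\<^sub>v (unit_vec n i - unit_vec n j) - (-1) \<cdot>\<^sub>v (unit_vec n i - unit_vec n j)
      = unit_vec n i - unit_vec n j"
    by (intro eq_vecI) auto
  moreover have "unit_vec n i - unit_vec n j \<in> carrier_vec n" by simp
  ultimately show ?thesis unfolding collapsed_value_iff[OF M] using ij by blast
qed

lemma collapsed_value_minus_one_if_unit_to_neg_unit: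
  assumes M: "M \<in> carrier_mat n n" and ij: "i < n" "j < n" "i \<noteq> j"
    and Mi: "M *\<^sub>v unit_vec n i = - unit_vec n j"
  shows "collapsed_value M (-1)"
proof -
  have "M *\<^sub>v unit_vec n i - (-1) \<cdot>\<^sub>v unit_vec n i = unit_vec n i - unit_vec n j"
    unfolding Mi by (intro eq_vecI) auto
  moreover have "unit_vec n i \<in> carrier_vec n" by simp
  ultimately show ?thesis unfolding collapsed_value_iff[OF M] using ij by blast
qed

lemma connected_laplacian_offdiag_less_diag:
  assumes L: "laplacian_of_connected_graph M"
    and ij: "i < dim_row M" "j < dim_row M" "i \<noteq> j"
  shows "M $$ (i, j) < M $$ (i, i)"
proof -
  define n where "n = dim_row M"
  obtain w :: "nat \<Rightarrow> nat \<Rightarrow> nat" where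
    offdiag: "M $$ (i, j) = - int (w i j)" and
    diag: "M $$ (i, i) = int (\<Sum>l \<in> {0..<n}. w i l)" and
    "(i, j) \<in> {(a, b). a < n \<and> b < n \<and> w a b > 0}\<^sup>*"
    using L ij unfolding laplacian_of_connected_graph_def n_def by blast
  then obtain y where "y < n" and "w i y > 0"
    using ij(3) by (auto elim: converse_rtranclE)
  then have "0 < (\<Sum>l \<in> {0..<n}. w i l)"
    using member_le_sum[of y "{0..<n}" "w i"] by simp
  then show ?thesis unfolding offdiag diag by linarith
qed

lemma collapsed_value_nonneg_if_connected_laplacian:
  assumes M: "M \<in> carrier_mat n n" and sym: "transpose_mat M = M"
    and psd: "pos_semidef (real_mat M)" and L: "laplacian_of_connected_graph M"
    and "collapsed_value M \<mu>"
  shows "0 \<le> \<mu>"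
proof (rule ccontr)
  assume "\<not> 0 \<le> \<mu>"
  then have "\<mu> = -1" using collapsed_value_ge_minus_one[OF M psd \<open>collapsed_value M \<mu>\<close>] by simp
  then obtain i j v where ij: "i < n" "j < n" "i \<noteq> j" and v: "v \<in> carrier_vec n"
    and eq: "M *\<^sub>v v - (-1) \<cdot>\<^sub>v v = unit_vec n i - unit_vec n j"
    using \<open>collapsed_value M \<mu>\<close> unfolding collapsed_value_iff[OF M] by blast
  have "\<bar>v \<bullet> (M *\<^sub>v v) + v \<bullet> v\<bar> \<le> v \<bullet> v"
    using collapsed_witness_quad_form_bounds(2)[OF M v ij eq] by simp
  moreover have "0 \<le> v \<bullet> (M *\<^sub>v v)" by (rule quad_form_nonneg_if_pos_semidef[OF M psd v])
  ultimately have "v \<bullet> (M *\<^sub>v v) = 0" by linarith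
  define x where "x = map_vec real_of_int v"
  have "x \<bullet> (real_mat M *\<^sub>v x) = 0"
    using \<open>v \<bullet> (M *\<^sub>v v) = 0\<close> of_int_quad_form[OF M v] unfolding x_def by simp
  then have "real_mat M *\<^sub>v x = 0\<^sub>v n"
    using pos_semidef_quad_form_eq_0_imp_mult_eq_0[OF real_mat_carrier[OF M] real_mat_symmetric[OF sym] psd]
      v unfolding x_def by simp
  then have Mv: "M *\<^sub>v v = 0\<^sub>v n"
    unfolding x_def real_mat_def of_int_hom.mult_mat_vec_hom[OF M v, symmetric] by simp
  then have "v = unit_vec n i - unit_vec n j"
    unfolding eq[symmetric] using v by (intro eq_vecI) auto
  then have "(M *\<^sub>v v) $ i = M $$ (i, i) - M $$ (i, j)"
    using M ij by (simp add: mult_minus_distrib_mat_vec[of _ n n] mult_mat_vec_unit_vec)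
  then show False
    using Mv connected_laplacian_offdiag_less_diag[OF L, of i j] M ij by auto
qed

theorem proposition3p4:
  fixes M :: "int mat" and n :: nat
  assumes "M \<in> carrier_mat n n"
    and "transpose_mat M = M"
    and "pos_semidef (real_mat M)"
  shows
    "(\<forall>lam1 \<mu>. largest_eigenvalue (real_mat M) lam1 \<longrightarrow>
        \<not> (-1 \<le> real_of_int \<mu> \<and> real_of_int \<mu> \<le> lam1 + sqrt 2) \<longrightarrow>
        \<not> collapsed_value M \<mu>)
   \<and> (((\<exists>i < n. \<exists>j < n. i \<noteq> j \<and> col M i = col M j) \<or>
        (\<exists>i < n. \<exists>j < n. i \<noteq> j \<and> M *\<^sub>v unit_vec n i = - unit_vec n j))
       \<longrightarrow> collapsed_value M (-1))
   \<and> ((pos_def (real_mat M) \<or> laplacian_of_connected_graph M) \<longrightarrow>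
        (\<forall>\<mu> < 0. \<not> collapsed_value M \<mu>))
   \<and> (\<forall>lamn \<mu>. pos_def (real_mat M) \<longrightarrow> smallest_eigenvalue (real_mat M) lamn \<longrightarrow>
        lamn > 0 \<longrightarrow> collapsed_value M \<mu> \<longrightarrow> real_of_int \<mu> \<ge> lamn - sqrt 2)"
proof -
  note M = assms(1) and sym = assms(2) and psd = assms(3)
  have sqrt2: "1 \<le> sqrt (2 :: real)" by simp
  show ?thesis
  proof (intro conjI allI impI notI)
    fix l \<mu> assume l: "largest_eigenvalue (real_mat M) l"
      and outside: "\<not> (-1 \<le> real_of_int \<mu> \<and> real_of_int \<mu> \<le> l + sqrt 2)"
      and collapsed: "collapsed_value M \<mu>"
    have "-1 \<le> real_of_int \<mu>" using collapsed_value_ge_minus_one[OF M psd collapsed] by simp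
    moreover have "real_of_int \<mu> \<le> l + 1"
      by (rule collapsed_value_le_largest_eigenvalue[OF M sym l collapsed])
    ultimately show False using outside sqrt2 by linarith
  next
    assume "(\<exists>i < n. \<exists>j < n. i \<noteq> j \<and> col M i = col M j) \<or>
      (\<exists>i < n. \<exists>j < n. i \<noteq> j \<and> M *\<^sub>v unit_vec n i = - unit_vec n j)"
    then show "collapsed_value M (-1)"
      using collapsed_value_minus_one_if_equal_cols[OF M]
        collapsed_value_minus_one_if_unit_to_neg_unit[OF M] by blast
  next
    fix \<mu> :: int assume "pos_def (real_mat M) \<or> laplacian_of_connected_graph M"
      and "\<mu> < 0" and collapsed: "collapsed_value M \<mu>"
    then show False
      using collapsed_value_nonneg_if_pos_def[OF M _ collapsed]
        collapsed_value_nonneg_if_connected_laplacian[OF M sym psd _ collapsed]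
      by fastforce
  next
    fix l \<mu> assume "smallest_eigenvalue (real_mat M) l" and "collapsed_value M \<mu>"
    then have "l - 1 \<le> real_of_int \<mu>" by (rule collapsed_value_ge_smallest_eigenvalue[OF M sym])
    then show "l - sqrt 2 \<le> real_of_int \<mu>" using sqrt2 by linarith
  qed
qed

end
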